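(* Let $X,Y$ be Banach spaces and $T\in\mathcal L(X,Y)$ be non-Tauberian. Then for every $\varepsilon>0$ there exists a $(1+\varepsilon)$-wide-$(s)$ sequence $(b_j)_{j=1}^\infty$ in $X$ such that $(Tb_j)$ is norm-convergent.
   Context: $T\in\mathcal L(X,Y)$ is Tauberian if $T^{**}(X^{**}\setminus X)\subset Y^{**}\setminus Y$ (with $X\subset X^{**}$ canonically). A (finite or infinite) sequence $(b_j)$ is $\mu$-basic if $\|\sum_{j=1}^k c_jb_j\|\le\mu\|\sum_j c_jb_j\|$ for all $k$ and all scalars $(c_j)$ with $\sum_j c_jb_j$ convergent. For $\lambda\ge1$, a finite or infinite sequence $(b_j)$ in a Banach space is $\lambda$-wide-$(s)$ if (a) $(b_j)$ is $2\lambda$-basic; (b) $\|b_j\|\le\lambda$ for all $j$; (c) $|\sum_{j=k}^n c_j|\le\lambda\|\sum_{j=1}^n c_jb_j\|$ for all $1\le k\le n$ (with $n$ at most the length of the sequence if finite) and all scalars $c_1,\dots,c_n$. *)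

theory Defs
  imports "HOL-Analysis.Analysis"
begin

type_synonym 'a bidual = "('a \<Rightarrow>\<^sub>L real) \<Rightarrow>\<^sub>L real"

definition canon_emb :: "'a::real_normed_vector \<Rightarrow> 'a bidual" where
  "canon_emb x = Blinfun (\<lambda>f. blinfun_apply f x)"

definition bitranspose :: "('a::real_normed_vector \<Rightarrow>\<^sub>L 'b::real_normed_vector) \<Rightarrow> 'a bidual \<Rightarrow> 'b bidual" where
  "bitranspose T phi = Blinfun (\<lambda>g. blinfun_apply phi (g o\<^sub>L T))"

definition tauberian :: "('a::real_normed_vector \<Rightarrow>\<^sub>L 'b::real_normed_vector) \<Rightarrow> bool" where
  "tauberian T \<longleftrightarrow>
     (\<forall>phi. phi \<notin> range canon_emb \<longrightarrow> bitranspose T phi \<notin> range (canon_emb :: 'b \<Rightarrow> 'b bidual))"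

definition mu_basic :: "real \<Rightarrow> (nat \<Rightarrow> 'a::real_normed_vector) \<Rightarrow> bool" where
  "mu_basic \<mu> b \<longleftrightarrow>
     (\<forall>c :: nat \<Rightarrow> real. summable (\<lambda>j. c j *\<^sub>R b j) \<longrightarrow>
        (\<forall>k. norm (\<Sum>j<k. c j *\<^sub>R b j) \<le> \<mu> * norm (\<Sum>j. c j *\<^sub>R b j)))"

text \<open>lambda-wide-(s) infinite sequence (indexed from 0).\<close>
definition wide_s :: "real \<Rightarrow> (nat \<Rightarrow> 'a::real_normed_vector) \<Rightarrow> bool" where
  "wide_s lam b \<longleftrightarrow>
     mu_basic (2 * lam) b \<and>
     (\<forall>j. norm (b j) \<le> lam) \<and>
     (\<forall>(c :: nat \<Rightarrow> real) k n. k \<le> n \<longrightarrow>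
        \<bar>\<Sum>j=k..n. c j\<bar> \<le> lam * norm (\<Sum>j\<le>n. c j *\<^sub>R b j))"

end

theory Submission
  imports Defs
begin

(* Since T is not Tauberian, T** maps some phi outside X into Y, say T** phi = y. As X is
   closed in X**, the Riesz lemma lets us assume norm phi = 1 and dist(phi, X) >= \<theta> with \<theta>
   close to 1. The vectors b n are chosen inductively by Helly's lemma: norm (b n) < 1 + \<epsilon>,
   T (b n) is within 1 / (n + 1) of y, and b n agrees with phi on a finite set of functionals
   almost norming the normalised combinations of b 0, ..., b (n - 1), phi. Consequently,
   replacing a tail b k, ..., b (n - 1) of a combination by phi increases its norm by at most
   the factor 1 / (1 - \<eta>). Together with dist(phi, X) >= \<theta> this bounds both the partial sums
   and the coefficient sums c k + ... + c n of a combination sum c j b j by its norm. *)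

section \<open>Hahn-Banach for sublinear functionals\<close>

definition dominated_linear_graph :: "('v::real_vector \<Rightarrow> real) \<Rightarrow> ('v \<times> real) set \<Rightarrow> bool" where
  "dominated_linear_graph p G \<longleftrightarrow>
     (0, 0) \<in> G \<and>
     (\<forall>x a y b. (x, a) \<in> G \<longrightarrow> (y, b) \<in> G \<longrightarrow> (x + y, a + b) \<in> G) \<and>
     (\<forall>x a c. (x, a) \<in> G \<longrightarrow> (c *\<^sub>R x, c * a) \<in> G) \<and>
     (\<forall>x a b. (x, a) \<in> G \<longrightarrow> (x, b) \<in> G \<longrightarrow> a = b) \<and>
     (\<forall>x a. (x, a) \<in> G \<longrightarrow> a \<le> p x)"

lemma dominated_linear_graphD:
  assumes "dominated_linear_graph p G"
  shows "(0, 0) \<in> G"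
    and "(x, a) \<in> G \<Longrightarrow> (y, b) \<in> G \<Longrightarrow> (x + y, a + b) \<in> G"
    and "(x, a) \<in> G \<Longrightarrow> (c *\<^sub>R x, c * a) \<in> G"
    and "(x, a) \<in> G \<Longrightarrow> (x, b) \<in> G \<Longrightarrow> a = b"
    and "(x, a) \<in> G \<Longrightarrow> a \<le> p x"
  using assms unfolding dominated_linear_graph_def by blast+

lemma dominated_linear_graph_Union:
  assumes "C \<noteq> {}" "chain\<^sub>\<subseteq> C" "\<And>G. G \<in> C \<Longrightarrow> dominated_linear_graph p G"
  shows "dominated_linear_graph p (\<Union>C)"
proof -
  have common: "\<exists>G\<in>C. (x, a) \<in> G \<and> (y, b) \<in> G" if "(x, a) \<in> \<Union>C" "(y, b) \<in> \<Union>C" for x a y b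
    using that \<open>chain\<^sub>\<subseteq> C\<close> unfolding chain_subset_def by blast
  show ?thesis
    unfolding dominated_linear_graph_def
  proof (intro conjI allI impI)
    show "(0, 0) \<in> \<Union>C" using assms(1,3) dominated_linear_graphD(1) by blast
  next
    fix x a y b assume "(x, a) \<in> \<Union>C" "(y, b) \<in> \<Union>C"
    with common show "(x + y, a + b) \<in> \<Union>C" using assms(3) dominated_linear_graphD(2) by blast
  next
    fix x a c assume "(x, a) \<in> \<Union>C"
    then show "(c *\<^sub>R x, c * a) \<in> \<Union>C" using assms(3) dominated_linear_graphD(3) by blast
  next
    fix x a b assume "(x, a) \<in> \<Union>C" "(x, b) \<in> \<Union>C"
    with common show "a = b" using assms(3) dominated_linear_graphD(4) by blast
  next
    fix x a assume "(x, a) \<in> \<Union>C"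
    then show "a \<le> p x" using assms(3) dominated_linear_graphD(5) by blast
  qed
qed

lemma dominated_linear_graph_adjoin_unique:
  assumes G: "dominated_linear_graph p G" and x0: "\<And>a. (x0, a) \<notin> G"
    and "(x1, a1) \<in> G" "(x2, a2) \<in> G" and eq: "x1 + t1 *\<^sub>R x0 = x2 + t2 *\<^sub>R x0"
  shows "t1 = t2"
proof (rule ccontr)
  assume ne: "t1 \<noteq> t2"
  note GD = dominated_linear_graphD[OF G]
  have diff: "(x2 - x1, a2 - a1) \<in> G"
    using GD(2)[OF assms(4) GD(3)[OF assms(3), of "-1"]] by simp
  have "x0 = (1 / (t1 - t2)) *\<^sub>R ((t1 - t2) *\<^sub>R x0)" using ne by simp
  also have "(t1 - t2) *\<^sub>R x0 = x2 - x1" using eq by (simp add: algebra_simps)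
  finally show False using x0 GD(3)[OF diff, of "1 / (t1 - t2)"] by simp
qed

lemma dominated_linear_graph_linear_minorant:
  assumes M: "dominated_linear_graph p M" and total: "\<And>x. \<exists>a. (x, a) \<in> M"
  shows "\<exists>g. linear g \<and> (\<forall>x. g x \<le> p x)"
proof -
  note MD = dominated_linear_graphD[OF M]
  define g where "g x = (THE a. (x, a) \<in> M)" for x
  have g: "(x, a) \<in> M \<longleftrightarrow> a = g x" for x a
  proof -
    obtain a0 where a0: "(x, a0) \<in> M" using total by blast
    then have "g x = a0" unfolding g_def using MD(4) by blast
    then show ?thesis using a0 MD(4) by blast
  qed
  have "linear g"
  proof (rule linearI)
    have "(x + y, g x + g y) \<in> M" for x y using MD(2) g by blast
    then show "g (x + y) = g x + g y" for x y by (simp add: g)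
    have "(c *\<^sub>R x, c * g x) \<in> M" for c x using MD(3) g by blast
    then show "g (c *\<^sub>R x) = c *\<^sub>R g x" for c x by (simp add: g)
  qed
  moreover have "g x \<le> p x" for x
    using MD(5) g by blast
  ultimately show ?thesis by blast
qed

context
  fixes p :: "'v::real_vector \<Rightarrow> real"
  assumes subadditive: "\<And>x y. p (x + y) \<le> p x + p y"
    and pos_homogeneous: "\<And>c x. 0 < c \<Longrightarrow> p (c *\<^sub>R x) = c * p x"
begin

lemma sublinear_zero: "p 0 = 0"
  using pos_homogeneous[of 2 0] by simp

lemma dominated_extension_value_exists:
  assumes G: "dominated_linear_graph p G"
  shows "\<exists>c. (\<forall>x a. (x, a) \<in> G \<longrightarrow> a - p (x - x0) \<le> c) \<and>
             (\<forall>y b. (y, b) \<in> G \<longrightarrow> c \<le> p (y + x0) - b)"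
proof -
  have below: "a - p (x - x0) \<le> p (y + x0) - b" if "(x, a) \<in> G" "(y, b) \<in> G" for x a y b
  proof -
    have "a + b \<le> p ((x - x0) + (y + x0))"
      using that dominated_linear_graphD(2,5)[OF G] by simp
    also have "\<dots> \<le> p (x - x0) + p (y + x0)" by (rule subadditive)
    finally show ?thesis by simp
  qed
  define L where "L = {a - p (x - x0) | x a. (x, a) \<in> G}"
  have "L \<noteq> {}" using dominated_linear_graphD(1)[OF G] by (auto simp: L_def)
  moreover have "bdd_above L"
    unfolding bdd_above_def L_def using below[OF _ dominated_linear_graphD(1)[OF G]] by fastforce
  ultimately show ?thesis
    by (intro exI[of _ "Sup L"]) (auto simp: L_def intro!: cSup_upper cSup_least below)
qed

lemma dominated_extension_bound:
  assumes G: "dominated_linear_graph p G" and xa: "(x, a) \<in> G"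
    and lower: "\<And>x a. (x, a) \<in> G \<Longrightarrow> a - p (x - x0) \<le> c"
    and upper: "\<And>y b. (y, b) \<in> G \<Longrightarrow> c \<le> p (y + x0) - b"
  shows "a + t * c \<le> p (x + t *\<^sub>R x0)"
proof -
  consider "t > 0" | "t = 0" | "t < 0" by linarith
  then show ?thesis
  proof cases
    case 1
    have "c \<le> p ((1/t) *\<^sub>R x + x0) - (1/t) * a"
      by (rule upper) (rule dominated_linear_graphD(3)[OF G xa])
    then have "t * c \<le> t * p ((1/t) *\<^sub>R x + x0) - a" using 1 by (simp add: field_simps)
    also have "t * p ((1/t) *\<^sub>R x + x0) = p (t *\<^sub>R ((1/t) *\<^sub>R x + x0))"
      using 1 by (intro pos_homogeneous[symmetric])
    also have "t *\<^sub>R ((1/t) *\<^sub>R x + x0) = x + t *\<^sub>R x0"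
      using 1 by (simp add: scaleR_add_right)
    finally show ?thesis by simp
  next
    case 2
    then show ?thesis using dominated_linear_graphD(5)[OF G xa] by simp
  next
    case 3
    have "(-1/t) * a - p ((-1/t) *\<^sub>R x - x0) \<le> c"
      by (rule lower) (rule dominated_linear_graphD(3)[OF G xa])
    then have "a - (-t) * p ((-1/t) *\<^sub>R x - x0) \<le> (-t) * c" using 3 by (simp add: field_simps)
    also have "(-t) * p ((-1/t) *\<^sub>R x - x0) = p ((-t) *\<^sub>R ((-1/t) *\<^sub>R x - x0))"
      using 3 by (intro pos_homogeneous[symmetric]) simp
    also have "(-t) *\<^sub>R ((-1/t) *\<^sub>R x - x0) = x + t *\<^sub>R x0"
      using 3 by (simp add: scaleR_diff_right)
    finally show ?thesis by simp
  qed
qed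

lemma dominated_linear_graph_adjoin:
  assumes G: "dominated_linear_graph p G" and x0: "\<And>a. (x0, a) \<notin> G"
    and lower: "\<And>x a. (x, a) \<in> G \<Longrightarrow> a - p (x - x0) \<le> c"
    and upper: "\<And>y b. (y, b) \<in> G \<Longrightarrow> c \<le> p (y + x0) - b"
  shows "dominated_linear_graph p {(x + t *\<^sub>R x0, a + t * c) | x a t. (x, a) \<in> G}"
    (is "dominated_linear_graph p ?G'")
  unfolding dominated_linear_graph_def
proof (intro conjI allI impI)
  note GD = dominated_linear_graphD[OF G]
  show "(0, 0) \<in> ?G'" using GD(1) by force
next
  fix x a y b assume "(x, a) \<in> ?G'" "(y, b) \<in> ?G'"
  then obtain x1 a1 t1 x2 a2 t2 where "(x1, a1) \<in> G" "(x2, a2) \<in> G"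
    "x = x1 + t1 *\<^sub>R x0" "a = a1 + t1 * c" "y = x2 + t2 *\<^sub>R x0" "b = a2 + t2 * c"
    by blast
  then have "(x + y, a + b) = ((x1 + x2) + (t1 + t2) *\<^sub>R x0, (a1 + a2) + (t1 + t2) * c)"
    "(x1 + x2, a1 + a2) \<in> G" by (auto simp: algebra_simps dominated_linear_graphD(2)[OF G])
  then show "(x + y, a + b) \<in> ?G'" by blast
next
  fix x a k assume "(x, a) \<in> ?G'"
  then obtain x1 a1 t1 where "(x1, a1) \<in> G" "x = x1 + t1 *\<^sub>R x0" "a = a1 + t1 * c"
    by blast
  moreover have "(k *\<^sub>R x1, k * a1) \<in> G"
    using dominated_linear_graphD(3)[OF G] \<open>(x1, a1) \<in> G\<close> by blast
  ultimately have "(k *\<^sub>R x, k * a) = (k *\<^sub>R x1 + (k * t1) *\<^sub>R x0, k * a1 + (k * t1) * c)"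
    "(k *\<^sub>R x1, k * a1) \<in> G" by (simp_all add: algebra_simps)
  then show "(k *\<^sub>R x, k * a) \<in> ?G'" by blast
next
  fix x a b assume "(x, a) \<in> ?G'" "(x, b) \<in> ?G'"
  then obtain x1 a1 t1 x2 a2 t2 where m: "(x1, a1) \<in> G" "(x2, a2) \<in> G"
    "x = x1 + t1 *\<^sub>R x0" "a = a1 + t1 * c" "x = x2 + t2 *\<^sub>R x0" "b = a2 + t2 * c"
    by blast
  then have "t1 = t2" by (intro dominated_linear_graph_adjoin_unique[OF G x0 m(1,2)]) simp
  then show "a = b" using m dominated_linear_graphD(4)[OF G] by simp
next
  fix x a assume "(x, a) \<in> ?G'"
  then show "a \<le> p x" using dominated_extension_bound[OF G _ lower upper] by blast
qed

lemma dominated_linear_graph_extend: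
  assumes G: "dominated_linear_graph p G" and x0: "\<And>a. (x0, a) \<notin> G"
  shows "\<exists>G'. dominated_linear_graph p G' \<and> G \<subset> G'"
proof -
  obtain c where lower: "\<And>x a. (x, a) \<in> G \<Longrightarrow> a - p (x - x0) \<le> c"
    and upper: "\<And>y b. (y, b) \<in> G \<Longrightarrow> c \<le> p (y + x0) - b"
    using dominated_extension_value_exists[OF G] by blast
  let ?G' = "{(x + t *\<^sub>R x0, a + t * c) | x a t. (x, a) \<in> G}"
  have "G \<subseteq> ?G'" by (force intro: exI[of _ "0::real"])
  moreover have "(x0, c) \<in> ?G'"
    using dominated_linear_graphD(1)[OF G] by (force intro: exI[of _ "1::real"])
  ultimately show ?thesis
    using dominated_linear_graph_adjoin[OF G x0 lower upper] x0 by blast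
qed

theorem sublinear_dominates_linear: "\<exists>g. linear g \<and> (\<forall>x. g x \<le> p x)"
proof -
  have "dominated_linear_graph p {(0, 0)}"
    by (simp add: dominated_linear_graph_def sublinear_zero)
  moreover have "\<Union>C \<in> {G. dominated_linear_graph p G}"
    if "C \<noteq> {}" "subset.chain {G. dominated_linear_graph p G} C" for C
    using that dominated_linear_graph_Union[of C p]
    unfolding subset_chain_def chain_subset_def by blast
  ultimately obtain M where M: "dominated_linear_graph p M"
    and maximal: "\<And>G. dominated_linear_graph p G \<Longrightarrow> M \<subseteq> G \<Longrightarrow> G = M"
    using subset_Zorn_nonempty[of "{G. dominated_linear_graph p G}"] by blast
  have "\<exists>a. (x, a) \<in> M" for x
    using dominated_linear_graph_extend[OF M] maximal by blast
  then show ?thesis by (rule dominated_linear_graph_linear_minorant[OF M])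
qed

end

section \<open>Separation and the canonical embedding into the bidual\<close>

(* Sublinear, bounded by the norm, and at most -\<delta> at -d for d in D: a linear minorant
   of it is a functional of norm at most 1 that is at least \<delta> on D. *)
definition separation_gauge :: "'v::real_normed_vector set \<Rightarrow> real \<Rightarrow> 'v \<Rightarrow> real" where
  "separation_gauge D \<delta> z = Inf {norm (z + t *\<^sub>R d) - t * \<delta> | t d. 0 \<le> t \<and> d \<in> D}"

context
  fixes D :: "'v::real_normed_vector set" and \<delta> :: real
  assumes convex_D: "convex D" and nonempty_D: "D \<noteq> {}"
    and norm_ge: "\<And>d. d \<in> D \<Longrightarrow> \<delta> \<le> norm d"
begin

lemma separation_gauge_le:
  assumes "0 \<le> t" "d \<in> D"
  shows "separation_gauge D \<delta> z \<le> norm (z + t *\<^sub>R d) - t * \<delta>"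
  unfolding separation_gauge_def
proof (rule cInf_lower)
  show "norm (z + t *\<^sub>R d) - t * \<delta> \<in> {norm (z + t *\<^sub>R d) - t * \<delta> | t d. 0 \<le> t \<and> d \<in> D}"
    using assms by blast
  have "- norm z \<le> norm (z + t *\<^sub>R d) - t * \<delta>" if "0 \<le> t" "d \<in> D" for t d
  proof -
    have "t * \<delta> \<le> norm (t *\<^sub>R d)" using norm_ge[OF \<open>d \<in> D\<close>] \<open>0 \<le> t\<close> by (simp add: mult_left_mono)
    also have "\<dots> \<le> norm (z + t *\<^sub>R d) + norm z" by (metis add_diff_cancel_left' norm_triangle_ineq4)
    finally show ?thesis by simp
  qed
  then show "bdd_below {norm (z + t *\<^sub>R d) - t * \<delta> | t d. 0 \<le> t \<and> d \<in> D}"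
    by (auto intro: bdd_belowI[of _ "- norm z"])
qed

lemma separation_gauge_greatest:
  assumes "\<And>t d. 0 \<le> t \<Longrightarrow> d \<in> D \<Longrightarrow> c \<le> norm (z + t *\<^sub>R d) - t * \<delta>"
  shows "c \<le> separation_gauge D \<delta> z"
  unfolding separation_gauge_def
proof (rule cInf_greatest)
  obtain d where "d \<in> D" using nonempty_D by blast
  then have "norm (z + 0 *\<^sub>R d) - 0 * \<delta> \<in> {norm (z + t *\<^sub>R d) - t * \<delta> | t d. 0 \<le> t \<and> d \<in> D}"
    by blast
  then show "{norm (z + t *\<^sub>R d) - t * \<delta> | t d. 0 \<le> t \<and> d \<in> D} \<noteq> {}" by blast
qed (use assms in blast)

lemma separation_gauge_le_norm: "separation_gauge D \<delta> z \<le> norm z"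
  using separation_gauge_le[of 0] nonempty_D by fastforce

lemma separation_gauge_subadditive:
  "separation_gauge D \<delta> (x + y) \<le> separation_gauge D \<delta> x + separation_gauge D \<delta> y"
proof -
  let ?p = "separation_gauge D \<delta>"
  have combine: "?p (x + y) \<le> (norm (x + t1 *\<^sub>R d1) - t1 * \<delta>) + (norm (y + t2 *\<^sub>R d2) - t2 * \<delta>)"
    if "0 \<le> t1" "d1 \<in> D" "0 \<le> t2" "d2 \<in> D" for t1 d1 t2 d2
  proof (cases "t1 + t2 = 0")
    case True
    then have "t1 = 0" "t2 = 0" using that by auto
    then show ?thesis using that separation_gauge_le[of 0 d1 "x + y"] norm_triangle_ineq[of x y] by simp
  next
    case False
    then have tp: "0 < t1 + t2" using that by simp
    define d where "d = (t1 / (t1 + t2)) *\<^sub>R d1 + (t2 / (t1 + t2)) *\<^sub>R d2"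
    have "d \<in> D" unfolding d_def
      using convex_D that tp by (intro convexD) (auto simp: add_divide_distrib[symmetric])
    then have "?p (x + y) \<le> norm (x + y + (t1 + t2) *\<^sub>R d) - (t1 + t2) * \<delta>"
      using separation_gauge_le tp by simp
    also have "x + y + (t1 + t2) *\<^sub>R d = (x + t1 *\<^sub>R d1) + (y + t2 *\<^sub>R d2)"
      using tp by (simp add: d_def scaleR_add_right)
    finally show ?thesis
      using norm_triangle_ineq[of "x + t1 *\<^sub>R d1" "y + t2 *\<^sub>R d2"] by (simp add: algebra_simps)
  qed
  have "?p (x + y) - (norm (y + t2 *\<^sub>R d2) - t2 * \<delta>) \<le> ?p x" if "0 \<le> t2" "d2 \<in> D" for t2 d2
  proof (rule separation_gauge_greatest)
    fix t1 :: real and d1 assume "0 \<le> t1" "d1 \<in> D"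
    then show "?p (x + y) - (norm (y + t2 *\<^sub>R d2) - t2 * \<delta>) \<le> norm (x + t1 *\<^sub>R d1) - t1 * \<delta>"
      using combine that by fastforce
  qed
  then have "?p (x + y) - ?p x \<le> ?p y"
    by (intro separation_gauge_greatest) fastforce
  then show ?thesis by simp
qed

lemma separation_gauge_le_scaled:
  assumes "0 < c"
  shows "separation_gauge D \<delta> (c *\<^sub>R z) \<le> c * separation_gauge D \<delta> z"
proof -
  have "separation_gauge D \<delta> (c *\<^sub>R z) / c \<le> separation_gauge D \<delta> z"
  proof (rule separation_gauge_greatest)
    fix t :: real and d assume "0 \<le> t" "d \<in> D"
    then have "separation_gauge D \<delta> (c *\<^sub>R z) \<le> norm (c *\<^sub>R z + (c * t) *\<^sub>R d) - (c * t) * \<delta>"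
      using assms by (intro separation_gauge_le) auto
    also have "norm (c *\<^sub>R z + (c * t) *\<^sub>R d) = c * norm (z + t *\<^sub>R d)"
      using assms by (simp flip: scaleR_scaleR scaleR_add_right)
    finally show "separation_gauge D \<delta> (c *\<^sub>R z) / c \<le> norm (z + t *\<^sub>R d) - t * \<delta>"
      using assms by (simp add: field_simps)
  qed
  then show ?thesis using assms by (simp add: field_simps)
qed

lemma separation_gauge_pos_homogeneous:
  assumes "0 < c"
  shows "separation_gauge D \<delta> (c *\<^sub>R z) = c * separation_gauge D \<delta> z"
proof -
  have "separation_gauge D \<delta> z \<le> (1 / c) * separation_gauge D \<delta> (c *\<^sub>R z)"
    using separation_gauge_le_scaled[of "1 / c" "c *\<^sub>R z"] assms by simp
  then show ?thesis
    using separation_gauge_le_scaled[OF assms, of z] assms by (simp add: field_simps)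
qed

theorem convex_separation_functional:
  "\<exists>g :: 'v \<Rightarrow>\<^sub>L real. norm g \<le> 1 \<and> (\<forall>d\<in>D. \<delta> \<le> blinfun_apply g d)"
proof -
  obtain g where g: "linear g" "\<And>x. g x \<le> separation_gauge D \<delta> x"
    using sublinear_dominates_linear[of "separation_gauge D \<delta>"]
      separation_gauge_subadditive separation_gauge_pos_homogeneous by blast
  have bound: "\<bar>g x\<bar> \<le> norm x" for x
    using g(2)[of x] g(2)[of "- x"] separation_gauge_le_norm[of x] separation_gauge_le_norm[of "- x"]
      linear_neg[OF g(1)] by simp
  then have "bounded_linear g"
    using g(1) by (intro bounded_linear_intro[of _ 1]) (auto simp: linear_add linear_scale)
  then have apply_g: "blinfun_apply (Blinfun g) = g"
    by (rule bounded_linear_Blinfun_apply)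
  have "norm (Blinfun g) \<le> 1"
    by (rule norm_blinfun_bound) (use bound apply_g in auto)
  moreover have "\<delta> \<le> g d" if "d \<in> D" for d
    using g(2)[of "- d"] separation_gauge_le[of 1 d "- d"] that linear_neg[OF g(1)] by simp
  ultimately show ?thesis using apply_g by auto
qed

end

lemma canon_emb_apply [simp]: "blinfun_apply (canon_emb x) f = blinfun_apply f x"
  unfolding canon_emb_def by (simp add: bounded_linear_Blinfun_apply)

lemma norm_canon_emb_le: "norm (canon_emb x) \<le> norm x"
proof (rule norm_blinfun_bound)
  show "norm (blinfun_apply (canon_emb x) f) \<le> norm x * norm f" for f
    using norm_blinfun[of f x] by (simp add: mult.commute)
qed simp

lemma bounded_linear_canon_emb: "bounded_linear canon_emb"
proof (rule bounded_linear_intro[of _ 1])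
  show "canon_emb (x + y) = canon_emb x + canon_emb y" for x y :: 'a
    by (rule blinfun_eqI) (simp add: blinfun.bilinear_simps)
  show "canon_emb (c *\<^sub>R x) = c *\<^sub>R canon_emb x" for c and x :: 'a
    by (rule blinfun_eqI) (simp add: blinfun.bilinear_simps)
  show "norm (canon_emb x) \<le> norm x * 1" for x :: 'a
    using norm_canon_emb_le by simp
qed

lemmas linear_canon_emb = bounded_linear.linear[OF bounded_linear_canon_emb]
lemmas canon_emb_minus = linear_neg[OF linear_canon_emb]
  and canon_emb_scaleR = linear_scale[OF linear_canon_emb]
  and canon_emb_sum = linear_sum[OF linear_canon_emb]

lemma norm_canon_emb [simp]: "norm (canon_emb x) = norm x"
proof -
  obtain g :: "'a \<Rightarrow>\<^sub>L real" where g: "norm g \<le> 1" "norm x \<le> blinfun_apply g x"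
    using convex_separation_functional[of "{x}" "norm x"] by auto
  have "blinfun_apply g x \<le> norm (canon_emb x) * norm g"
    using norm_blinfun[of "canon_emb x" g] by simp
  also have "\<dots> \<le> norm (canon_emb x)"
    using g(1) by (simp add: mult_left_le)
  finally show ?thesis using g(2) norm_canon_emb_le[of x] by linarith
qed

lemma bitranspose_apply [simp]:
  "blinfun_apply (bitranspose T phi) g = blinfun_apply phi (g o\<^sub>L T)"
proof -
  have "bounded_linear (\<lambda>g. blinfun_apply phi (g o\<^sub>L T))"
    by (rule bounded_linear_compose[OF blinfun.bounded_linear_right
          bounded_bilinear.bounded_linear_left[OF bounded_bilinear_blinfun_compose]])
  then show ?thesis unfolding bitranspose_def by (simp add: bounded_linear_Blinfun_apply)
qed

section \<open>Helly's lemma\<close>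

lemma blinfun_in_span_if_common_kernel:
  fixes F :: "('v::real_normed_vector \<Rightarrow>\<^sub>L real) set"
  assumes "finite F" and "\<And>v. \<forall>f\<in>F. blinfun_apply f v = 0 \<Longrightarrow> blinfun_apply L v = 0"
  shows "L \<in> span F"
  using assms
proof (induction F arbitrary: L rule: finite_induct)
  case empty
  then have "L = 0" by (intro blinfun_eqI) simp
  then show ?case by (simp add: span_zero)
next
  case (insert f0 F)
  show ?case
  proof (cases "\<exists>z. (\<forall>f\<in>F. blinfun_apply f z = 0) \<and> blinfun_apply f0 z \<noteq> 0")
    case True
    then obtain z where z: "\<forall>f\<in>F. blinfun_apply f z = 0" "blinfun_apply f0 z \<noteq> 0" by blast
    define z0 where "z0 = (1 / blinfun_apply f0 z) *\<^sub>R z"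
    have z0: "\<forall>f\<in>F. blinfun_apply f z0 = 0" "blinfun_apply f0 z0 = 1"
      using z by (auto simp: z0_def blinfun.bilinear_simps)
    have "L - blinfun_apply L z0 *\<^sub>R f0 \<in> span F"
    proof (rule insert.IH)
      fix v assume v: "\<forall>f\<in>F. blinfun_apply f v = 0"
      have "\<forall>f\<in>insert f0 F. blinfun_apply f (v - blinfun_apply f0 v *\<^sub>R z0) = 0"
        using v z0 by (auto simp: blinfun.bilinear_simps)
      then have "blinfun_apply L (v - blinfun_apply f0 v *\<^sub>R z0) = 0" by (rule insert.prems)
      then show "blinfun_apply (L - blinfun_apply L z0 *\<^sub>R f0) v = 0"
        by (simp add: blinfun.bilinear_simps)
    qed
    then have "L - blinfun_apply L z0 *\<^sub>R f0 \<in> span (insert f0 F)"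
      using span_mono[of F "insert f0 F"] by blast
    moreover have "blinfun_apply L z0 *\<^sub>R f0 \<in> span (insert f0 F)"
      by (intro span_scale span_base) simp
    ultimately have "(L - blinfun_apply L z0 *\<^sub>R f0) + blinfun_apply L z0 *\<^sub>R f0 \<in> span (insert f0 F)"
      by (rule span_add)
    then show ?thesis by simp
  next
    case False
    then have "L \<in> span F" using insert.prems by (intro insert.IH) auto
    then show ?thesis using span_mono[of F "insert f0 F"] by blast
  qed
qed

lemma bidual_agrees_on_span:
  assumes "L \<in> span F" and "\<forall>f\<in>F. blinfun_apply f x = blinfun_apply phi f"
  shows "blinfun_apply L x = blinfun_apply phi L"
  using assms(1)
proof (induction rule: span_induct_alt)
  case (step c f L)
  then show ?case using assms(2) by (simp add: blinfun.bilinear_simps)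
qed (simp add: blinfun.bilinear_simps)

lemma bidual_interpolation:
  fixes phi :: "'v::real_normed_vector bidual"
  assumes "finite F"
  shows "\<exists>x. \<forall>f\<in>F. blinfun_apply f x = blinfun_apply phi f"
  using assms
proof (induction F rule: finite_induct)
  case (insert f0 F)
  then obtain x where x: "\<forall>f\<in>F. blinfun_apply f x = blinfun_apply phi f" by blast
  show ?case
  proof (cases "\<exists>z. (\<forall>f\<in>F. blinfun_apply f z = 0) \<and> blinfun_apply f0 z \<noteq> 0")
    case True
    then obtain z where z: "\<forall>f\<in>F. blinfun_apply f z = 0" "blinfun_apply f0 z \<noteq> 0" by blast
    define x' where "x' = x + ((blinfun_apply phi f0 - blinfun_apply f0 x) / blinfun_apply f0 z) *\<^sub>R z"
    have "\<forall>f\<in>insert f0 F. blinfun_apply f x' = blinfun_apply phi f"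
      using x z by (auto simp: x'_def blinfun.bilinear_simps)
    then show ?thesis by blast
  next
    case False
    then have "f0 \<in> span F"
      using blinfun_in_span_if_common_kernel[OF insert.hyps(1)] by blast
    then have "blinfun_apply f0 x = blinfun_apply phi f0"
      using bidual_agrees_on_span x by blast
    then show ?thesis using x by auto
  qed
qed simp

theorem bidual_helly:
  fixes phi :: "'v::real_normed_vector bidual"
  assumes F: "finite F" and r: "norm phi < r"
  shows "\<exists>x. norm x < r \<and> (\<forall>f\<in>F. blinfun_apply f x = blinfun_apply phi f)"
proof (rule ccontr)
  assume "\<not> ?thesis"
  then have far: "r \<le> norm x" if "\<forall>f\<in>F. blinfun_apply f x = blinfun_apply phi f" for x
    using that by (meson not_less)
  define K where "K = {x. \<forall>f\<in>F. blinfun_apply f x = blinfun_apply phi f}"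
  obtain x0 where x0: "x0 \<in> K" using bidual_interpolation[OF F, of phi] K_def by blast
  have "convex K" unfolding K_def convex_def
    by (auto simp: blinfun.bilinear_simps algebra_simps simp flip: distrib_right)
  moreover have "r \<le> norm d" if "d \<in> K" for d
    using far that unfolding K_def by blast
  ultimately obtain g :: "'v \<Rightarrow>\<^sub>L real" where g: "norm g \<le> 1" "\<forall>d\<in>K. r \<le> blinfun_apply g d"
    using convex_separation_functional[of K r] x0 by blast
  have "blinfun_apply g v = 0" if v: "\<forall>f\<in>F. blinfun_apply f v = 0" for v
  proof (rule ccontr)
    assume nz: "blinfun_apply g v \<noteq> 0"
    define t where "t = - (\<bar>blinfun_apply g x0\<bar> + \<bar>r\<bar> + 1) / blinfun_apply g v"
    have "x0 + t *\<^sub>R v \<in> K" using x0 v by (simp add: K_def blinfun.bilinear_simps)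
    then have "r \<le> blinfun_apply g (x0 + t *\<^sub>R v)" using g by blast
    also have "\<dots> = blinfun_apply g x0 - (\<bar>blinfun_apply g x0\<bar> + \<bar>r\<bar> + 1)"
      using nz by (simp add: t_def blinfun.bilinear_simps)
    finally show False by linarith
  qed
  then have "g \<in> span F" by (rule blinfun_in_span_if_common_kernel[OF F])
  moreover have "\<forall>f\<in>F. blinfun_apply f x0 = blinfun_apply phi f" using x0 K_def by simp
  ultimately have eq: "blinfun_apply g x0 = blinfun_apply phi g"
    by (rule bidual_agrees_on_span)
  have "r \<le> blinfun_apply phi g" using g(2) x0 eq by auto
  also have "\<dots> \<le> norm phi * norm g" using norm_blinfun[of phi g] by simp
  also have "\<dots> \<le> norm phi" using g(1) by (simp add: mult_left_le)
  finally show False using r by simp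
qed

theorem bidual_helly_image:
  fixes phi :: "'v::real_normed_vector bidual" and T :: "'v \<Rightarrow>\<^sub>L 'w::real_normed_vector"
  assumes F: "finite F" and r: "norm phi < r" and "0 < \<delta>"
    and T: "bitranspose T phi = canon_emb y"
  shows "\<exists>x. norm x < r \<and> (\<forall>f\<in>F. blinfun_apply f x = blinfun_apply phi f) \<and> norm (T x - y) < \<delta>"
proof (rule ccontr)
  assume "\<not> ?thesis"
  then have far: "\<delta> \<le> norm (T x - y)"
    if "norm x < r" "\<forall>f\<in>F. blinfun_apply f x = blinfun_apply phi f" for x
    using that by (meson not_less)
  define K where "K = ball 0 r \<inter> {x. \<forall>f\<in>F. blinfun_apply f x = blinfun_apply phi f}"
  define D where "D = (\<lambda>z. z - y) ` blinfun_apply T ` K"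
  obtain x0 where x0: "x0 \<in> K" using bidual_helly[OF F r] K_def by auto
  have "convex {x. \<forall>f\<in>F. blinfun_apply f x = blinfun_apply phi f}" unfolding convex_def
    by (auto simp: blinfun.bilinear_simps algebra_simps simp flip: distrib_right)
  then have "convex K" unfolding K_def by (intro convex_Int convex_ball)
  then have "convex D" unfolding D_def
    by (intro convex_translation_subtract convex_linear_image) (simp add: bounded_linear.linear[OF blinfun.bounded_linear_right])
  moreover have "\<delta> \<le> norm d" if "d \<in> D" for d
    using far that unfolding D_def K_def by auto
  moreover have "D \<noteq> {}" using x0 D_def by blast
  ultimately obtain g :: "'w \<Rightarrow>\<^sub>L real" where g: "\<forall>d\<in>D. \<delta> \<le> blinfun_apply g d"
    using convex_separation_functional[of D \<delta>] by blast
  obtain x where x: "norm x < r" "\<forall>f\<in>insert (g o\<^sub>L T) F. blinfun_apply f x = blinfun_apply phi f"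
    using bidual_helly[of "insert (g o\<^sub>L T) F" phi r] F r by auto
  have "blinfun_apply phi (g o\<^sub>L T) = blinfun_apply g y"
    using arg_cong[OF T, of "\<lambda>\<psi>. blinfun_apply \<psi> g"] by simp
  then have "blinfun_apply g (T x - y) = 0" using x(2) by (simp add: blinfun.bilinear_simps)
  moreover have "T x - y \<in> D" using x unfolding K_def D_def by auto
  then have "\<delta> \<le> blinfun_apply g (T x - y)" using g by blast
  ultimately show False using \<open>0 < \<delta>\<close> by simp
qed

section \<open>Finite almost norming sets and the Riesz lemma\<close>

lemma exists_almost_norming_point:
  fixes psi :: "'d::real_normed_vector \<Rightarrow>\<^sub>L real"
  assumes "0 < \<eta>"
  shows "\<exists>h. norm h \<le> 1 \<and> norm psi - \<eta> < blinfun_apply psi h"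
proof (rule ccontr)
  assume "\<not> ?thesis"
  then have below: "blinfun_apply psi h \<le> norm psi - \<eta>" if "norm h \<le> 1" for h
    using that by (meson not_less)
  have "\<bar>blinfun_apply psi x\<bar> \<le> (norm psi - \<eta>) * norm x" for x
  proof (cases "x = 0")
    case False
    define h where "h = (1 / norm x) *\<^sub>R x"
    have "norm h \<le> 1" "norm (- h) \<le> 1" using False by (auto simp: h_def)
    then have "\<bar>blinfun_apply psi h\<bar> \<le> norm psi - \<eta>"
      using below[of h] below[of "- h"] by (simp add: blinfun.bilinear_simps)
    moreover have "blinfun_apply psi x = norm x * blinfun_apply psi h"
      using False by (simp add: h_def blinfun.bilinear_simps)
    ultimately show ?thesis by (simp add: abs_mult mult.commute mult_left_mono)
  qed simp
  then have "norm psi \<le> norm psi - \<eta>"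
    using below[of 0] by (intro norm_blinfun_bound) auto
  then show False using assms by simp
qed

lemma compact_imp_finite_almost_norming:
  fixes K :: "('d::real_normed_vector \<Rightarrow>\<^sub>L real) set"
  assumes "compact K" and "0 < \<eta>"
  shows "\<exists>H. finite H \<and> (\<forall>h\<in>H. norm h \<le> 1) \<and> (\<forall>u\<in>K. \<exists>h\<in>H. norm u - \<eta> < blinfun_apply u h)"
proof -
  have "open {u :: 'd \<Rightarrow>\<^sub>L real. norm u - \<eta> < blinfun_apply u h}" for h
    by (intro open_Collect_less continuous_intros)
  moreover have "K \<subseteq> (\<Union>h\<in>{h. norm h \<le> 1}. {u. norm u - \<eta> < blinfun_apply u h})"
    using exists_almost_norming_point[OF assms(2)] by blast
  ultimately obtain H where "H \<subseteq> {h. norm h \<le> 1}" "finite H"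
    "K \<subseteq> (\<Union>h\<in>H. {u. norm u - \<eta> < blinfun_apply u h})"
    by (rule compactE_image[OF assms(1)])
  then show ?thesis by (intro exI[of _ H]) blast
qed

lemma compact_bounded_combinations:
  fixes V :: "nat \<Rightarrow> 'a::real_normed_vector"
  shows "compact {\<Sum>i<m. a i *\<^sub>R V i | a. \<forall>i<m. \<bar>a i\<bar> \<le> M}"
proof (induction m)
  case 0
  have "{\<Sum>i<0. a i *\<^sub>R V i | a. \<forall>i<0. \<bar>a i\<bar> \<le> M} = {0}" by auto
  then show ?case by simp
next
  case (Suc m)
  let ?S = "\<lambda>m. {\<Sum>i<m. a i *\<^sub>R V i | a. \<forall>i<m. \<bar>a i\<bar> \<le> M}"
  have eq: "?S (Suc m) = {x + y | x y. x \<in> ?S m \<and> y \<in> (\<lambda>t. t *\<^sub>R V m) ` {-M..M}}"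
  proof (intro set_eqI iffI)
    fix u assume "u \<in> ?S (Suc m)"
    then obtain a where "u = (\<Sum>i<m. a i *\<^sub>R V i) + a m *\<^sub>R V m" "\<forall>i<Suc m. \<bar>a i\<bar> \<le> M"
      by auto
    then show "u \<in> {x + y | x y. x \<in> ?S m \<and> y \<in> (\<lambda>t. t *\<^sub>R V m) ` {-M..M}}"
      by (fastforce simp: abs_le_iff)
  next
    fix u assume "u \<in> {x + y | x y. x \<in> ?S m \<and> y \<in> (\<lambda>t. t *\<^sub>R V m) ` {-M..M}}"
    then obtain a t where u: "u = (\<Sum>i<m. a i *\<^sub>R V i) + t *\<^sub>R V m"
      and a: "\<forall>i<m. \<bar>a i\<bar> \<le> M" and t: "\<bar>t\<bar> \<le> M"
      by (auto simp: abs_le_iff)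
    have "(\<Sum>i<m. (a(m := t)) i *\<^sub>R V i) = (\<Sum>i<m. a i *\<^sub>R V i)" by (intro sum.cong) auto
    then have "u = (\<Sum>i<Suc m. (a(m := t)) i *\<^sub>R V i)" using u by simp
    moreover have "\<forall>i<Suc m. \<bar>(a(m := t)) i\<bar> \<le> M" using a t by (simp add: less_Suc_eq)
    ultimately show "u \<in> ?S (Suc m)" by blast
  qed
  have "compact ((\<lambda>t. t *\<^sub>R V m) ` {-M..M})"
    by (intro compact_continuous_image continuous_intros) simp
  then show ?case unfolding eq using Suc.IH by (rule compact_sums[rotated])
qed

lemma riesz_lemma:
  fixes S :: "'a::real_normed_vector set"
  assumes "subspace S" "closed S" "z \<notin> S" "0 < \<theta>" "\<theta> < 1"
  shows "\<exists>s0 c. s0 \<in> S \<and> 0 < c \<and> norm (c *\<^sub>R (z - s0)) = 1 \<and>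
           (\<forall>s\<in>S. \<theta> \<le> norm (c *\<^sub>R (z - s0) - s))"
proof -
  have "S \<noteq> {}" using assms(1) subspace_0 by blast
  define d where "d = infdist z S"
  have d: "0 < d" unfolding d_def by (rule infdist_pos_not_in_closed[OF assms(2) \<open>S \<noteq> {}\<close> assms(3)])
  have "infdist z S < d / \<theta>" using d assms(4,5) by (simp add: d_def field_simps)
  then obtain s0 where s0: "s0 \<in> S" "norm (z - s0) < d / \<theta>"
    unfolding infdist_notempty[OF \<open>S \<noteq> {}\<close>] dist_norm
    using \<open>S \<noteq> {}\<close> by (subst (asm) cINF_less_iff) (auto intro: bdd_belowI[of _ 0])
  define \<nu> where "\<nu> = norm (z - s0)"
  have d_le: "d \<le> norm (z - s)" if "s \<in> S" for s
    unfolding d_def using infdist_le[OF that, of z] by (simp add: dist_norm)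
  have \<nu>: "0 < \<nu>" using d_le[OF s0(1)] d \<nu>_def by linarith
  have "\<theta> \<le> norm ((1 / \<nu>) *\<^sub>R (z - s0) - s)" if "s \<in> S" for s
  proof -
    have "s0 + \<nu> *\<^sub>R s \<in> S" using assms(1) s0(1) that by (simp add: subspace_add subspace_scale)
    moreover have "\<theta> * \<nu> < d" using s0(2) assms(4) by (simp add: \<nu>_def field_simps)
    ultimately have "\<theta> * \<nu> < norm (z - (s0 + \<nu> *\<^sub>R s))" using d_le by fastforce
    also have "z - (s0 + \<nu> *\<^sub>R s) = \<nu> *\<^sub>R ((1 / \<nu>) *\<^sub>R (z - s0) - s)"
      using \<nu> by (simp add: algebra_simps)
    finally show ?thesis using \<nu> by simp
  qed
  moreover have "norm ((1 / \<nu>) *\<^sub>R (z - s0)) = 1" using \<nu> by (simp add: \<nu>_def)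
  ultimately show ?thesis using s0(1) \<nu> by (intro exI[of _ s0] exI[of _ "1 / \<nu>"]) simp
qed

lemma closed_range_canon_emb: "closed (range (canon_emb :: 'a::banach \<Rightarrow> 'a bidual))"
proof -
  have "complete (canon_emb ` (UNIV :: 'a set))"
    by (rule complete_isometric_image[of 1]) (auto simp: bounded_linear_canon_emb complete_UNIV)
  then show ?thesis by (rule complete_imp_closed)
qed

lemma non_tauberian_normalized_witness:
  fixes T :: "'a::banach \<Rightarrow>\<^sub>L 'b::banach"
  assumes "\<not> tauberian T" "0 < \<theta>" "\<theta> < 1"
  shows "\<exists>phi y. norm phi = 1 \<and> (\<forall>x. \<theta> \<le> norm (phi - canon_emb x)) \<and>
           bitranspose T phi = canon_emb y"
proof -
  obtain phi0 y0 where phi0: "phi0 \<notin> range canon_emb" "bitranspose T phi0 = canon_emb y0"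
    using assms(1) unfolding tauberian_def by blast
  have "subspace (range (canon_emb :: 'a \<Rightarrow> 'a bidual))"
    by (rule linear_subspace_image[OF linear_canon_emb subspace_UNIV])
  then obtain x0 c where c: "norm (c *\<^sub>R (phi0 - canon_emb x0)) = 1"
    "\<forall>x. \<theta> \<le> norm (c *\<^sub>R (phi0 - canon_emb x0) - canon_emb x)"
    using riesz_lemma[OF _ closed_range_canon_emb phi0(1) assms(2,3)] by blast
  have "bitranspose T (c *\<^sub>R (phi0 - canon_emb x0)) = canon_emb (c *\<^sub>R (y0 - T x0))"
  proof (rule blinfun_eqI)
    fix g
    have "blinfun_apply phi0 (g o\<^sub>L T) = blinfun_apply g y0"
      using arg_cong[OF phi0(2), of "\<lambda>\<psi>. blinfun_apply \<psi> g"] by simp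
    then show "blinfun_apply (bitranspose T (c *\<^sub>R (phi0 - canon_emb x0))) g =
        blinfun_apply (canon_emb (c *\<^sub>R (y0 - T x0))) g"
      by (simp add: blinfun.bilinear_simps)
  qed
  with c show ?thesis by blast
qed

section \<open>The inductive construction\<close>

definition phi_comb ::
    "(nat \<Rightarrow> 'a::real_normed_vector) \<Rightarrow> 'a bidual \<Rightarrow> nat \<Rightarrow> (nat \<Rightarrow> real) \<Rightarrow> real \<Rightarrow> 'a bidual" where
  "phi_comb x phi n a s = (\<Sum>j<n. a j *\<^sub>R canon_emb (x j)) + s *\<^sub>R phi"

definition decay_weight :: "real \<Rightarrow> nat \<Rightarrow> real" where
  "decay_weight \<eta> n = 1 - \<eta> + \<eta> / 2 ^ n"

(* Replacing x k, ..., x (n - 1) by phi, with their coefficients moved onto phi, enlarges the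
   norm at most by the factor decay_weight \<eta> k / decay_weight \<eta> n < 1 / (1 - \<eta>). The weights
   decrease strictly, which leaves room for the factor lost in each inductive step. *)
definition collapse_bounded ::
    "real \<Rightarrow> 'a::real_normed_vector bidual \<Rightarrow> nat \<Rightarrow> (nat \<Rightarrow> 'a) \<Rightarrow> bool" where
  "collapse_bounded \<eta> phi n x \<longleftrightarrow>
     (\<forall>k\<le>n. \<forall>a s.
        decay_weight \<eta> n / decay_weight \<eta> k * norm (phi_comb x phi k a (s + (\<Sum>j\<in>{k..<n}. a j)))
          \<le> norm (phi_comb x phi n a s))"

lemma phi_comb_canon_emb: "phi_comb x phi n a s = canon_emb (\<Sum>j<n. a j *\<^sub>R x j) + s *\<^sub>R phi"
  unfolding phi_comb_def by (simp add: canon_emb_sum canon_emb_scaleR)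

lemma phi_comb_scaleR: "phi_comb x phi n (\<lambda>j. c * a j) (c * s) = c *\<^sub>R phi_comb x phi n a s"
  unfolding phi_comb_def by (simp add: scaleR_add_right scaleR_sum_right)

lemma phi_comb_cong:
  assumes "\<And>j. j < k \<Longrightarrow> x' j = x j"
  shows "phi_comb x' phi k = phi_comb x phi k"
  using assms unfolding phi_comb_def by (intro ext arg_cong2[where f = "(+)"] sum.cong) auto

lemma phi_comb_Suc:
  "phi_comb x phi (Suc n) a s = phi_comb x phi n a (s + a n) + a n *\<^sub>R (canon_emb (x n) - phi)"
  by (simp add: phi_comb_def algebra_simps)

lemma abs_mult_le_norm_phi_comb:
  assumes "\<And>v. \<theta> \<le> norm (phi - canon_emb v)"
  shows "\<bar>s\<bar> * \<theta> \<le> norm (phi_comb x phi n a s)"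
proof (cases "s = 0")
  case False
  define v where "v = - (1 / s) *\<^sub>R (\<Sum>j<n. a j *\<^sub>R x j)"
  have "phi_comb x phi n a s = s *\<^sub>R (phi - canon_emb v)"
    using False by (simp add: phi_comb_canon_emb v_def canon_emb_scaleR canon_emb_minus algebra_simps)
  then show ?thesis using assms[of v] by (simp add: mult_left_mono)
qed simp

lemma decay_weight_bounds:
  assumes "0 < \<eta>" "\<eta> < 1"
  shows "1 - \<eta> < decay_weight \<eta> n" "decay_weight \<eta> n \<le> 1"
    "decay_weight \<eta> (Suc n) < decay_weight \<eta> n"
proof -
  have "\<eta> / 2 ^ n \<le> \<eta>" using assms by (simp add: divide_le_eq)
  then show "1 - \<eta> < decay_weight \<eta> n" "decay_weight \<eta> n \<le> 1"
    using assms by (auto simp: decay_weight_def)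
  show "decay_weight \<eta> (Suc n) < decay_weight \<eta> n"
    using assms by (simp add: decay_weight_def field_simps)
qed

lemma decay_weight_ratio_ge:
  assumes "0 < \<eta>" "\<eta> < 1"
  shows "1 - \<eta> \<le> decay_weight \<eta> n / decay_weight \<eta> k"
proof -
  note w = decay_weight_bounds[OF assms]
  have "(1 - \<eta>) * decay_weight \<eta> k \<le> decay_weight \<eta> n"
    using w(1)[of n] mult_left_le[OF w(2)[of k], of "1 - \<eta>"] assms by linarith
  then show ?thesis using w(1)[of k] assms by (simp add: le_divide_eq)
qed

lemma collapse_boundedD:
  assumes "collapse_bounded \<eta> phi n x" and "k \<le> n"
  shows "decay_weight \<eta> n / decay_weight \<eta> k * norm (phi_comb x phi k a (s + (\<Sum>j\<in>{k..<n}. a j)))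
      \<le> norm (phi_comb x phi n a s)"
  using assms unfolding collapse_bounded_def by blast

lemma collapse_bounded_0: "collapse_bounded \<eta> phi 0 x"
  by (simp add: collapse_bounded_def decay_weight_def)

lemma collapse_bounded_cong:
  assumes "collapse_bounded \<eta> phi n x" and "\<And>j. j < n \<Longrightarrow> x' j = x j"
  shows "collapse_bounded \<eta> phi n x'"
proof -
  have "phi_comb x' phi k = phi_comb x phi k" if "k \<le> n" for k
    using that assms(2) by (intro phi_comb_cong) auto
  then show ?thesis using assms(1) unfolding collapse_bounded_def by auto
qed

lemma collapse_bounded_collapse:
  assumes "collapse_bounded \<eta> phi n x" "k \<le> n" "0 < \<eta>" "\<eta> < 1"
  shows "(1 - \<eta>) * norm (phi_comb x phi k a (s + (\<Sum>j\<in>{k..<n}. a j))) \<le> norm (phi_comb x phi n a s)"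
proof -
  have "(1 - \<eta>) * norm (phi_comb x phi k a (s + (\<Sum>j\<in>{k..<n}. a j)))
      \<le> decay_weight \<eta> n / decay_weight \<eta> k * norm (phi_comb x phi k a (s + (\<Sum>j\<in>{k..<n}. a j)))"
    using decay_weight_ratio_ge[OF assms(3,4)] by (intro mult_right_mono) auto
  also have "\<dots> \<le> norm (phi_comb x phi n a s)"
    by (rule collapse_boundedD[OF assms(1,2)])
  finally show ?thesis .
qed

lemma collapse_bounded_coeff_bound:
  assumes "collapse_bounded \<eta> phi n x" and dist: "\<And>v. \<theta> \<le> norm (phi - canon_emb v)"
    and "0 < \<theta>" "0 < \<eta>" "\<eta> < 1"
  shows "\<theta> * (1 - \<eta>) * \<bar>s\<bar> \<le> norm (phi_comb x phi n a s)"
    and "j < n \<Longrightarrow> \<theta> * (1 - \<eta>) * \<bar>a j\<bar> \<le> 2 * norm (phi_comb x phi n a s)"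
proof -
  define t where "t k = s + (\<Sum>j\<in>{k..<n}. a j)" for k
  have t: "\<theta> * (1 - \<eta>) * \<bar>t k\<bar> \<le> norm (phi_comb x phi n a s)" if "k \<le> n" for k
  proof -
    have "\<theta> * (1 - \<eta>) * \<bar>t k\<bar> \<le> (1 - \<eta>) * norm (phi_comb x phi k a (t k))"
      using abs_mult_le_norm_phi_comb[OF dist, of "t k" x k a] assms(5)
      by (simp add: mult_left_mono mult.commute mult.left_commute)
    also have "\<dots> \<le> norm (phi_comb x phi n a s)"
      unfolding t_def by (rule collapse_bounded_collapse[OF assms(1) that assms(4,5)])
    finally show ?thesis .
  qed
  show "\<theta> * (1 - \<eta>) * \<bar>s\<bar> \<le> norm (phi_comb x phi n a s)"
    using t[of n] by (simp add: t_def)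
  assume "j < n"
  then have "a j = t j - t (Suc j)" unfolding t_def by (simp add: sum.atLeast_Suc_lessThan)
  then have "\<bar>a j\<bar> \<le> \<bar>t j\<bar> + \<bar>t (Suc j)\<bar>" by linarith
  then have "\<theta> * (1 - \<eta>) * \<bar>a j\<bar> \<le> \<theta> * (1 - \<eta>) * \<bar>t j\<bar> + \<theta> * (1 - \<eta>) * \<bar>t (Suc j)\<bar>"
    using assms(3,5) by (simp add: mult_left_mono flip: distrib_left)
  then show "\<theta> * (1 - \<eta>) * \<bar>a j\<bar> \<le> 2 * norm (phi_comb x phi n a s)"
    using t[of j] t[of "Suc j"] \<open>j < n\<close> by simp
qed

lemma collapse_bounded_normalized_coeffs:
  assumes cb: "collapse_bounded \<eta> phi n x" and dist: "\<And>v. \<theta> \<le> norm (phi - canon_emb v)"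
    and "0 < \<theta>" "0 < \<eta>" "\<eta> < 1"
  shows "\<exists>c. (1 / norm (phi_comb x phi n a s)) *\<^sub>R phi_comb x phi n a s
               = (\<Sum>i<Suc n. c i *\<^sub>R (if i < n then canon_emb (x i) else phi)) \<and>
             (\<forall>i<Suc n. \<bar>c i\<bar> \<le> 2 / (\<theta> * (1 - \<eta>)))"
proof -
  define \<nu> where "\<nu> = norm (phi_comb x phi n a s)"
  have small: "\<bar>w / \<nu>\<bar> \<le> 2 / (\<theta> * (1 - \<eta>))" if "\<theta> * (1 - \<eta>) * \<bar>w\<bar> \<le> 2 * \<nu>" for w
  proof (cases "\<nu> = 0")
    case False
    then have "0 < \<nu>" by (simp add: \<nu>_def)
    then show ?thesis using that assms(3-5) by (simp add: abs_div field_simps)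
  qed (use assms(3-5) in simp)
  define c where "c = (\<lambda>j. a j / \<nu>)(n := s / \<nu>)"
  have "\<theta> * (1 - \<eta>) * \<bar>s\<bar> \<le> 2 * \<nu>"
    using collapse_bounded_coeff_bound(1)[OF cb dist assms(3-5), of s a] norm_ge_zero[of "phi_comb x phi n a s"]
    unfolding \<nu>_def by linarith
  then have "\<forall>i<Suc n. \<bar>c i\<bar> \<le> 2 / (\<theta> * (1 - \<eta>))"
    using small collapse_bounded_coeff_bound(2)[OF cb dist assms(3-5)]
    by (auto simp: c_def \<nu>_def less_Suc_eq)
  moreover have "(1 / \<nu>) *\<^sub>R phi_comb x phi n a s
      = (\<Sum>i<Suc n. c i *\<^sub>R (if i < n then canon_emb (x i) else phi))"
  proof -
    have "(\<Sum>i<n. c i *\<^sub>R (if i < n then canon_emb (x i) else phi)) = (\<Sum>j<n. (a j / \<nu>) *\<^sub>R canon_emb (x j))"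
      by (intro sum.cong) (auto simp: c_def)
    then show ?thesis
      using phi_comb_scaleR[of x phi n "1 / \<nu>" a s] by (simp add: phi_comb_def c_def)
  qed
  ultimately show ?thesis unfolding \<nu>_def by blast
qed

lemma collapse_bounded_norming_set:
  assumes cb: "collapse_bounded \<eta> phi n x" and dist: "\<And>v. \<theta> \<le> norm (phi - canon_emb v)"
    and "0 < \<theta>" "0 < \<eta>" "\<eta> < 1" "\<rho> < 1"
  shows "\<exists>H. finite H \<and> (\<forall>h\<in>H. norm h \<le> 1) \<and>
           (\<forall>a s. \<exists>h\<in>H. \<rho> * norm (phi_comb x phi n a s) \<le> blinfun_apply (phi_comb x phi n a s) h)"
proof -
  define V where "V i = (if i < n then canon_emb (x i) else phi)" for i
  define M where "M = 2 / (\<theta> * (1 - \<eta>))"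
  have "0 < 1 - \<rho>" using assms(6) by simp
  then have "\<exists>H. finite H \<and> (\<forall>h\<in>H. norm h \<le> 1) \<and>
      (\<forall>u\<in>{\<Sum>i<Suc n. c i *\<^sub>R V i | c. \<forall>i<Suc n. \<bar>c i\<bar> \<le> M}.
         \<exists>h\<in>H. norm u - (1 - \<rho>) < blinfun_apply u h)"
    by (rule compact_imp_finite_almost_norming[OF compact_bounded_combinations[where m = "Suc n" and V = V and M = M]])
  then obtain H where H: "finite H" "\<forall>h\<in>H. norm h \<le> 1"
    "\<forall>u\<in>{\<Sum>i<Suc n. c i *\<^sub>R V i | c. \<forall>i<Suc n. \<bar>c i\<bar> \<le> M}.
       \<exists>h\<in>H. norm u - (1 - \<rho>) < blinfun_apply u h"
    by (elim exE conjE)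
  have "\<exists>h\<in>H. \<rho> * norm P \<le> blinfun_apply P h" if "P = phi_comb x phi n a s" for P a s
  proof -
    have "\<exists>c. (1 / norm P) *\<^sub>R P = (\<Sum>i<Suc n. c i *\<^sub>R V i) \<and> (\<forall>i<Suc n. \<bar>c i\<bar> \<le> M)"
      unfolding that V_def M_def by (rule collapse_bounded_normalized_coeffs[OF cb dist assms(3-5)])
    then have "(1 / norm P) *\<^sub>R P \<in> {\<Sum>i<Suc n. c i *\<^sub>R V i | c. \<forall>i<Suc n. \<bar>c i\<bar> \<le> M}"
      by blast
    then obtain h where h: "h \<in> H" "norm ((1 / norm P) *\<^sub>R P) - (1 - \<rho>) < blinfun_apply ((1 / norm P) *\<^sub>R P) h"
      using H(3) by blast
    have "\<rho> * norm P \<le> blinfun_apply P h"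
    proof (cases "P = 0")
      case False
      then have "\<rho> < blinfun_apply P h / norm P" using h(2) by (simp add: blinfun.bilinear_simps)
      then show ?thesis using False by (simp add: field_simps)
    qed simp
    then show ?thesis using h(1) by blast
  qed
  then show ?thesis using H(1,2) by blast
qed

lemma collapse_bounded_Suc:
  assumes cb: "collapse_bounded \<eta> phi n x" and "0 < \<eta>" "\<eta> < 1"
    and z: "\<And>a s c. decay_weight \<eta> (Suc n) / decay_weight \<eta> n * norm (phi_comb x phi n a s)
                    \<le> norm (phi_comb x phi n a s + c *\<^sub>R (canon_emb z - phi))"
  shows "collapse_bounded \<eta> phi (Suc n) (x(n := z))"
  unfolding collapse_bounded_def
proof (intro allI impI)
  let ?W = "decay_weight \<eta>"
  have W: "0 < ?W m" for m
    using decay_weight_bounds(1)[OF assms(2,3), of m] assms(3) by linarith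
  have below: "phi_comb (x(n := z)) phi k = phi_comb x phi k" if "k \<le> n" for k
    using that by (intro phi_comb_cong) auto
  fix k a s assume "k \<le> Suc n"
  let ?N = "\<lambda>k. norm (phi_comb x phi k a ((s + a n) + (\<Sum>j\<in>{k..<n}. a j)))"
  show "?W (Suc n) / ?W k * norm (phi_comb (x(n := z)) phi k a (s + (\<Sum>j\<in>{k..<Suc n}. a j)))
      \<le> norm (phi_comb (x(n := z)) phi (Suc n) a s)"
  proof (cases "k = Suc n")
    case True
    then show ?thesis using W by simp
  next
    case False
    then have k: "k \<le> n" using \<open>k \<le> Suc n\<close> by simp
    have "?W (Suc n) / ?W k * ?N k = ?W (Suc n) / ?W n * (?W n / ?W k * ?N k)"
      using W[of n] by simp
    also have "\<dots> \<le> ?W (Suc n) / ?W n * ?N n"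
    proof (rule mult_left_mono)
      show "?W n / ?W k * ?N k \<le> ?N n"
        using collapse_boundedD[OF cb k, of a "s + a n"] by simp
      show "0 \<le> ?W (Suc n) / ?W n" using W[of n] W[of "Suc n"] by simp
    qed
    also have "\<dots> \<le> norm (phi_comb x phi n a (s + a n) + a n *\<^sub>R (canon_emb z - phi))"
      using z by simp
    also have "\<dots> = norm (phi_comb (x(n := z)) phi (Suc n) a s)"
      using below[of n] by (simp add: phi_comb_Suc)
    finally show ?thesis
      using k by (simp add: below ac_simps)
  qed
qed

lemma collapse_bounded_extend:
  fixes T :: "'a::real_normed_vector \<Rightarrow>\<^sub>L 'b::real_normed_vector"
  assumes cb: "collapse_bounded \<eta> phi n x" and dist: "\<And>v. \<theta> \<le> norm (phi - canon_emb v)"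
    and "0 < \<theta>" "0 < \<eta>" "\<eta> < 1" "norm phi < r" "0 < \<delta>" "bitranspose T phi = canon_emb y"
  shows "\<exists>z. norm z < r \<and> norm (T z - y) < \<delta> \<and> collapse_bounded \<eta> phi (Suc n) (x(n := z))"
proof -
  define \<rho> where "\<rho> = decay_weight \<eta> (Suc n) / decay_weight \<eta> n"
  have "\<rho> < 1"
    using decay_weight_bounds[OF assms(4,5), of n] assms(5) by (simp add: \<rho>_def)
  obtain H where H: "finite H" "\<forall>h\<in>H. norm h \<le> 1"
    "\<forall>a s. \<exists>h\<in>H. \<rho> * norm (phi_comb x phi n a s) \<le> blinfun_apply (phi_comb x phi n a s) h"
    using collapse_bounded_norming_set[OF cb dist assms(3-5) \<open>\<rho> < 1\<close>] by auto
  obtain z where z: "norm z < r" "\<forall>h\<in>H. blinfun_apply h z = blinfun_apply phi h" "norm (T z - y) < \<delta>"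
    using bidual_helly_image[OF H(1) assms(6-8)] by blast
  have "\<rho> * norm (phi_comb x phi n a s) \<le> norm (phi_comb x phi n a s + c *\<^sub>R (canon_emb z - phi))"
    for a s c
  proof -
    let ?P = "phi_comb x phi n a s"
    obtain h where h: "h \<in> H" "\<rho> * norm ?P \<le> blinfun_apply ?P h" using H(3) by blast
    have "blinfun_apply ?P h = blinfun_apply (?P + c *\<^sub>R (canon_emb z - phi)) h"
      using z(2) h(1) by (simp add: blinfun.bilinear_simps)
    also have "\<dots> \<le> norm (?P + c *\<^sub>R (canon_emb z - phi)) * norm h"
      by (metis abs_ge_self norm_blinfun order_trans real_norm_def)
    also have "\<dots> \<le> norm (?P + c *\<^sub>R (canon_emb z - phi))"
      using H(2) h(1) by (simp add: mult_left_le)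
    finally show ?thesis using h(2) by linarith
  qed
  then have "collapse_bounded \<eta> phi (Suc n) (x(n := z))"
    using collapse_bounded_Suc[OF cb assms(4,5)] \<rho>_def by blast
  then show ?thesis using z by blast
qed

lemma collapse_bounded_sequence_exists:
  fixes T :: "'a::real_normed_vector \<Rightarrow>\<^sub>L 'b::real_normed_vector"
  assumes dist: "\<And>v. \<theta> \<le> norm (phi - canon_emb v)"
    and "0 < \<theta>" "0 < \<eta>" "\<eta> < 1" "norm phi < r" "bitranspose T phi = canon_emb y"
  shows "\<exists>b. (\<forall>n. collapse_bounded \<eta> phi n b) \<and> (\<forall>j. norm (b j) \<le> r) \<and> (\<lambda>j. T (b j)) \<longlonglongrightarrow> y"
proof -
  define good where "good n x \<longleftrightarrow> collapse_bounded \<eta> phi n x \<and>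
      (\<forall>j<n. norm (x j) < r \<and> norm (T (x j) - y) < 1 / real (Suc j))" for n x
  have "\<exists>f. \<forall>n. good n (f n) \<and> (\<forall>j<n. f (Suc n) j = f n j)"
  proof (rule dependent_nat_choice)
    show "\<exists>x. good 0 x" by (simp add: good_def collapse_bounded_0)
  next
    fix x n assume "good n x"
    then have cb: "collapse_bounded \<eta> phi n x" by (simp add: good_def)
    have "0 < 1 / real (Suc n)" by simp
    from collapse_bounded_extend[OF cb dist assms(2-5) this assms(6)]
    obtain z where "norm z < r" "norm (T z - y) < 1 / real (Suc n)"
      "collapse_bounded \<eta> phi (Suc n) (x(n := z))" by blast
    then have "good (Suc n) (x(n := z))" using \<open>good n x\<close> by (auto simp: good_def less_Suc_eq)
    then show "\<exists>x'. good (Suc n) x' \<and> (\<forall>j<n. x' j = x j)" by force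
  qed
  then obtain f where f: "\<And>n. good n (f n)" "\<And>n j. j < n \<Longrightarrow> f (Suc n) j = f n j" by blast
  define b where "b j = f (Suc j) j" for j
  have f_b: "f n j = b j" if "j < n" for n j
    using that
  proof (induction n)
    case (Suc n)
    then show ?case by (cases "j = n") (auto simp: b_def f(2))
  qed simp
  have b: "norm (b j) < r" "norm (T (b j) - y) < 1 / real (Suc j)" for j
    using f(1)[of "Suc j"] unfolding good_def b_def by auto
  have "collapse_bounded \<eta> phi n b" for n
    by (rule collapse_bounded_cong[of \<eta> phi n "f n"]) (use f(1)[of n] f_b in \<open>auto simp: good_def\<close>)
  moreover have "norm (b j) \<le> r" for j
    using b(1) less_imp_le by blast
  moreover have "(\<lambda>j. T (b j)) \<longlonglongrightarrow> y"
    using LIMSEQ_norm_0[OF b(2)] by (subst Lim_null) simp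
  ultimately show ?thesis by blast
qed

section \<open>Wide-(s) sequences\<close>

lemma mu_basic_if_partial_sums_bounded:
  assumes "\<And>c k N. k \<le> N \<Longrightarrow> norm (\<Sum>j<k. c j *\<^sub>R b j) \<le> \<mu> * norm (\<Sum>j<N. c j *\<^sub>R b j)"
  shows "mu_basic \<mu> b"
  unfolding mu_basic_def
proof (intro allI impI)
  fix c :: "nat \<Rightarrow> real" and k assume "summable (\<lambda>j. c j *\<^sub>R b j)"
  then have "(\<lambda>N. \<mu> * norm (\<Sum>j<N. c j *\<^sub>R b j)) \<longlonglongrightarrow> \<mu> * norm (\<Sum>j. c j *\<^sub>R b j)"
    by (intro tendsto_mult_left tendsto_norm summable_LIMSEQ)
  then show "norm (\<Sum>j<k. c j *\<^sub>R b j) \<le> \<mu> * norm (\<Sum>j. c j *\<^sub>R b j)"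
    by (rule LIMSEQ_le_const) (use assms in blast)
qed

context
  fixes b :: "nat \<Rightarrow> 'a::real_normed_vector" and phi :: "'a bidual" and \<theta> \<eta> :: real
  assumes collapse: "\<And>n. collapse_bounded \<eta> phi n b"
    and dist: "\<And>v. \<theta> \<le> norm (phi - canon_emb v)"
    and \<theta>: "0 < \<theta>" and \<eta>: "0 < \<eta>" "\<eta> < 1"
begin

lemma collapse_bounded_phi_comb_le:
  assumes "k \<le> n"
  shows "(1 - \<eta>) * norm (phi_comb b phi k c (\<Sum>j\<in>{k..<n}. c j)) \<le> norm (\<Sum>j<n. c j *\<^sub>R b j)"
  using collapse_bounded_collapse[OF collapse assms \<eta>, of c 0] by (simp add: phi_comb_canon_emb)

lemma collapse_bounded_tail_sum:
  assumes "k \<le> n"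
  shows "\<theta> * (1 - \<eta>) * \<bar>\<Sum>j=k..n. c j\<bar> \<le> norm (\<Sum>j\<le>n. c j *\<^sub>R b j)"
proof -
  let ?t = "\<Sum>j\<in>{k..<Suc n}. c j"
  have "\<theta> * (1 - \<eta>) * \<bar>?t\<bar> \<le> (1 - \<eta>) * norm (phi_comb b phi k c ?t)"
    using abs_mult_le_norm_phi_comb[OF dist, of ?t b k c] \<eta>
    by (simp add: mult_left_mono mult.commute mult.left_commute)
  also have "\<dots> \<le> norm (\<Sum>j<Suc n. c j *\<^sub>R b j)"
    using assms by (intro collapse_bounded_phi_comb_le) simp
  finally show ?thesis by (simp add: atLeastLessThanSuc_atLeastAtMost lessThan_Suc_atMost)
qed

lemma collapse_bounded_partial_sum:
  assumes "norm phi \<le> 1" "\<theta> \<le> 1" "k \<le> N"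
  shows "\<theta> * (1 - \<eta>) * norm (\<Sum>j<k. c j *\<^sub>R b j) \<le> 2 * norm (\<Sum>j<N. c j *\<^sub>R b j)"
proof -
  define t where "t = (\<Sum>j\<in>{k..<N}. c j)"
  define E where "E = phi_comb b phi k c t"
  have "norm (\<Sum>j<k. c j *\<^sub>R b j) = norm (E - t *\<^sub>R phi)"
    by (simp add: E_def phi_comb_canon_emb)
  also have "\<dots> \<le> norm E + \<bar>t\<bar> * norm phi"
    using norm_triangle_ineq4[of E "t *\<^sub>R phi"] by simp
  also have "\<dots> \<le> norm E + \<bar>t\<bar>"
    using assms(1) mult_left_le[of "norm phi" "\<bar>t\<bar>"] by simp
  finally have "\<theta> * norm (\<Sum>j<k. c j *\<^sub>R b j) \<le> \<theta> * norm E + \<theta> * \<bar>t\<bar>"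
    using \<theta> by (simp add: mult_left_mono flip: distrib_left)
  moreover have "\<theta> * \<bar>t\<bar> \<le> norm E"
    using abs_mult_le_norm_phi_comb[OF dist] by (simp add: E_def mult.commute)
  moreover have "\<theta> * norm E \<le> norm E"
    using assms(2) \<theta> by (simp add: mult_left_le_one_le)
  ultimately have "\<theta> * norm (\<Sum>j<k. c j *\<^sub>R b j) \<le> 2 * norm E" by linarith
  then have "(1 - \<eta>) * (\<theta> * norm (\<Sum>j<k. c j *\<^sub>R b j)) \<le> (1 - \<eta>) * (2 * norm E)"
    using \<eta> by (intro mult_left_mono) auto
  then have "\<theta> * (1 - \<eta>) * norm (\<Sum>j<k. c j *\<^sub>R b j) \<le> 2 * ((1 - \<eta>) * norm E)"
    by (simp only: ac_simps)
  also have "(1 - \<eta>) * norm E \<le> norm (\<Sum>j<N. c j *\<^sub>R b j)"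
    unfolding E_def t_def by (rule collapse_bounded_phi_comb_le[OF assms(3)])
  finally show ?thesis by simp
qed

theorem wide_s_if_collapse_bounded:
  assumes "norm phi \<le> 1" "\<theta> \<le> 1" "\<And>j. norm (b j) \<le> lam" "\<theta> * (1 - \<eta>) * lam = 1"
  shows "wide_s lam b"
proof -
  have lam_nonneg: "0 \<le> lam" using assms(3)[of 0] norm_ge_zero[of "b 0"] by linarith
  have scale: "X \<le> lam * Y" if "\<theta> * (1 - \<eta>) * X \<le> Y" for X Y
  proof -
    have "X = (\<theta> * (1 - \<eta>) * lam) * X" using assms(4) by simp
    also have "\<dots> = lam * (\<theta> * (1 - \<eta>) * X)" by (simp only: ac_simps)
    also have "\<dots> \<le> lam * Y" using that lam_nonneg by (rule mult_left_mono)
    finally show ?thesis .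
  qed
  have "mu_basic (2 * lam) b"
    by (rule mu_basic_if_partial_sums_bounded)
      (use scale collapse_bounded_partial_sum[OF assms(1,2)] in \<open>simp add: mult.assoc mult.left_commute\<close>)
  moreover have "\<bar>\<Sum>j=k..n. c j\<bar> \<le> lam * norm (\<Sum>j\<le>n. c j *\<^sub>R b j)" if "k \<le> n" for c k n
    using scale collapse_bounded_tail_sum[OF that] by blast
  ultimately show ?thesis using assms(3) by (simp add: wide_s_def)
qed

end

theorem theorem5:
  fixes T :: "'a::banach \<Rightarrow>\<^sub>L 'b::banach"
  assumes "\<not> tauberian T"
  shows "\<forall>\<epsilon>>0. \<exists>b :: nat \<Rightarrow> 'a. wide_s (1 + \<epsilon>) b \<and> convergent (\<lambda>j. blinfun_apply T (b j))"
proof (intro allI impI)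
  fix \<epsilon> :: real assume "\<epsilon> > 0"
  \<comment> \<open>With \<open>\<eta> = 1 - \<theta>\<close> this makes \<open>1 / (\<theta> * (1 - \<eta>)) = 1 + \<epsilon>\<close>.\<close>
  define \<theta> where "\<theta> = inverse (sqrt (1 + \<epsilon>))"
  have \<theta>: "0 < \<theta>" "\<theta> < 1" "\<theta> * (1 - (1 - \<theta>)) * (1 + \<epsilon>) = 1"
    using \<open>\<epsilon> > 0\<close> by (auto simp: \<theta>_def field_simps)
  obtain phi y where phi: "norm phi = 1" "\<And>v. \<theta> \<le> norm (phi - canon_emb v)" "bitranspose T phi = canon_emb y"
    using non_tauberian_normalized_witness[OF assms \<theta>(1,2)] by blast
  have "0 < 1 - \<theta>" "1 - \<theta> < 1" "norm phi < 1 + \<epsilon>" using \<theta> phi(1) \<open>\<epsilon> > 0\<close> by auto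
  then obtain b where b: "\<And>n. collapse_bounded (1 - \<theta>) phi n b" "\<And>j. norm (b j) \<le> 1 + \<epsilon>"
    "(\<lambda>j. T (b j)) \<longlonglongrightarrow> y"
    using collapse_bounded_sequence_exists[OF phi(2) \<theta>(1) _ _ _ phi(3)] by blast
  have "wide_s (1 + \<epsilon>) b"
    using wide_s_if_collapse_bounded[OF b(1) phi(2) \<theta>(1) \<open>0 < 1 - \<theta>\<close> \<open>1 - \<theta> < 1\<close>] phi(1) \<theta> b(2)
    by simp
  with b(3) show "\<exists>b. wide_s (1 + \<epsilon>) b \<and> convergent (\<lambda>j. T (b j))"
    unfolding convergent_def by blast
qed

end
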